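(* Let $S^0$ be an adequate transversal of a quasi-adequate semigroup $S$. If $x\in E(S)$ then $x^0\in E^0$. In particular, if $x\in I\cup\Lambda$ then $x^0\in E^0$.
   Context: For a semigroup $S$, $S^1$ is $S$ with an identity adjoined, $E(S)$ its idempotents, $\mathcal{L},\mathcal{R}$ Green's relations. $\mathcal{R}^\ast=\{(a,b):\forall x,y\in S^1,\ xa=ya\iff xb=yb\}$, $\mathcal{L}^\ast=\{(a,b):\forall x,y\in S^1,\ ax=ay\iff bx=by\}$. $S$ is abundant if each $\mathcal{R}^\ast$- and $\mathcal{L}^\ast$-class contains an idempotent; adequate if also idempotents commute (then $a^+$, $a^\ast$ are the unique idempotents $\mathcal{R}^\ast$-, resp. $\mathcal{L}^\ast$-related to $a$). Quasi-adequate: abundant with $E(S)$ a subsemigroup. An abundant subsemigroup $U$ of abundant $S$ is a $\ast$-subsemigroup if $\mathcal{L}^\ast(U)=\mathcal{L}^\ast(S)\cap(U\times U)$, $\mathcal{R}^\ast(U)=\mathcal{R}^\ast(S)\cap(U\times U)$. An adequate $\ast$-subsemigroup $S^0$ of abundant $S$ is an adequate transversal if each $x\in S$ has a unique $\overline{x}\in S^0$ and idempotents $e,f$ of $S$ (then unique, written $e_x,f_x$) with $x=e\overline{x}f$, $e\,\mathcal{L}\,\overline{x}^+$, $f\,\mathcal{R}\,\overline{x}^\ast$. $E^0=E(S^0)$, $I=\{e_x:x\in S\}$, $\Lambda=\{f_x:x\in S\}$. For a regular element $x$ of $S$, $x^0$ denotes the unique inverse of $x$ with $xx^0=e_x$ and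 $x^0x=f_x$ (it is the unique inverse of $x$ lying in $S^0$). *)

theory Defs
  imports Main
begin

text \<open>Elements of S^1 are represented as 'a option, None being the adjoined identity.\<close>

definition semigroup_on :: "'a::semigroup_mult set \<Rightarrow> bool" where
  "semigroup_on S \<longleftrightarrow> (\<forall>a\<in>S. \<forall>b\<in>S. a * b \<in> S)"

definition ones :: "'a set \<Rightarrow> 'a option set" where
  "ones S = Some ` S \<union> {None}"

fun lm1 :: "'a::semigroup_mult option \<Rightarrow> 'a \<Rightarrow> 'a" where
  "lm1 None a = a"
| "lm1 (Some x) a = x * a"

fun rm1 :: "'a::semigroup_mult \<Rightarrow> 'a option \<Rightarrow> 'a" where
  "rm1 a None = a"
| "rm1 a (Some x) = a * x"

definition idems :: "'a::semigroup_mult set \<Rightarrow> 'a set" where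
  "idems S = {e\<in>S. e * e = e}"

definition greenL :: "'a::semigroup_mult set \<Rightarrow> 'a \<Rightarrow> 'a \<Rightarrow> bool" where
  "greenL S a b \<longleftrightarrow> a \<in> S \<and> b \<in> S \<and>
     (\<exists>x\<in>ones S. a = lm1 x b) \<and> (\<exists>y\<in>ones S. b = lm1 y a)"

definition greenR :: "'a::semigroup_mult set \<Rightarrow> 'a \<Rightarrow> 'a \<Rightarrow> bool" where
  "greenR S a b \<longleftrightarrow> a \<in> S \<and> b \<in> S \<and>
     (\<exists>x\<in>ones S. a = rm1 b x) \<and> (\<exists>y\<in>ones S. b = rm1 a y)"

definition Rstar :: "'a::semigroup_mult set \<Rightarrow> 'a \<Rightarrow> 'a \<Rightarrow> bool" where
  "Rstar S a b \<longleftrightarrow> a \<in> S \<and> b \<in> S \<and>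
     (\<forall>x\<in>ones S. \<forall>y\<in>ones S. lm1 x a = lm1 y a \<longleftrightarrow> lm1 x b = lm1 y b)"

definition Lstar :: "'a::semigroup_mult set \<Rightarrow> 'a \<Rightarrow> 'a \<Rightarrow> bool" where
  "Lstar S a b \<longleftrightarrow> a \<in> S \<and> b \<in> S \<and>
     (\<forall>x\<in>ones S. \<forall>y\<in>ones S. rm1 a x = rm1 a y \<longleftrightarrow> rm1 b x = rm1 b y)"

definition abundant :: "'a::semigroup_mult set \<Rightarrow> bool" where
  "abundant S \<longleftrightarrow> semigroup_on S \<and>
     (\<forall>a\<in>S. \<exists>e\<in>idems S. Rstar S a e) \<and> (\<forall>a\<in>S. \<exists>e\<in>idems S. Lstar S a e)"

definition adequate :: "'a::semigroup_mult set \<Rightarrow> bool" where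
  "adequate S \<longleftrightarrow> abundant S \<and> (\<forall>e\<in>idems S. \<forall>f\<in>idems S. e * f = f * e)"

definition quasi_adequate :: "'a::semigroup_mult set \<Rightarrow> bool" where
  "quasi_adequate S \<longleftrightarrow> abundant S \<and> (\<forall>e\<in>idems S. \<forall>f\<in>idems S. e * f \<in> idems S)"

definition star_subsemigroup :: "'a::semigroup_mult set \<Rightarrow> 'a set \<Rightarrow> bool" where
  "star_subsemigroup U S \<longleftrightarrow> U \<subseteq> S \<and> abundant U \<and>
     (\<forall>a\<in>U. \<forall>b\<in>U. Lstar U a b \<longleftrightarrow> Lstar S a b) \<and>
     (\<forall>a\<in>U. \<forall>b\<in>U. Rstar U a b \<longleftrightarrow> Rstar S a b)"

definition plus_of :: "'a::semigroup_mult set \<Rightarrow> 'a \<Rightarrow> 'a" where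
  "plus_of U a = (THE e. e \<in> idems U \<and> Rstar U a e)"

definition star_of :: "'a::semigroup_mult set \<Rightarrow> 'a \<Rightarrow> 'a" where
  "star_of U a = (THE e. e \<in> idems U \<and> Lstar U a e)"

definition decomp :: "'a::semigroup_mult set \<Rightarrow> 'a set \<Rightarrow> 'a \<Rightarrow> 'a \<Rightarrow> 'a \<Rightarrow> 'a \<Rightarrow> bool" where
  "decomp S0 S x xb e f \<longleftrightarrow> xb \<in> S0 \<and> e \<in> idems S \<and> f \<in> idems S \<and>
     x = e * xb * f \<and> greenL S e (plus_of S0 xb) \<and> greenR S f (star_of S0 xb)"

definition adequate_transversal :: "'a::semigroup_mult set \<Rightarrow> 'a set \<Rightarrow> bool" where
  "adequate_transversal S0 S \<longleftrightarrow> adequate S0 \<and> star_subsemigroup S0 S \<and>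
     (\<forall>x\<in>S. (\<exists>xb e f. decomp S0 S x xb e f) \<and>
        (\<forall>xb e f xb' e' f'. decomp S0 S x xb e f \<longrightarrow> decomp S0 S x xb' e' f' \<longrightarrow> xb = xb'))"

definition e_of :: "'a::semigroup_mult set \<Rightarrow> 'a set \<Rightarrow> 'a \<Rightarrow> 'a" where
  "e_of S0 S x = (THE e. \<exists>xb f. decomp S0 S x xb e f)"

definition f_of :: "'a::semigroup_mult set \<Rightarrow> 'a set \<Rightarrow> 'a \<Rightarrow> 'a" where
  "f_of S0 S x = (THE f. \<exists>xb e. decomp S0 S x xb e f)"

definition I_set :: "'a::semigroup_mult set \<Rightarrow> 'a set \<Rightarrow> 'a set" where
  "I_set S0 S = {e_of S0 S x | x. x \<in> S}"

definition Lambda_set :: "'a::semigroup_mult set \<Rightarrow> 'a set \<Rightarrow> 'a set" where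
  "Lambda_set S0 S = {f_of S0 S x | x. x \<in> S}"

definition inverse_in :: "'a::semigroup_mult set \<Rightarrow> 'a \<Rightarrow> 'a \<Rightarrow> bool" where
  "inverse_in S x y \<longleftrightarrow> y \<in> S \<and> x * y * x = x \<and> y * x * y = y"

definition regular_in :: "'a::semigroup_mult set \<Rightarrow> 'a \<Rightarrow> bool" where
  "regular_in S x \<longleftrightarrow> x \<in> S \<and> (\<exists>y. inverse_in S x y)"

definition zero_of :: "'a::semigroup_mult set \<Rightarrow> 'a set \<Rightarrow> 'a \<Rightarrow> 'a" where
  "zero_of S0 S x = (THE y. inverse_in S x y \<and> x * y = e_of S0 S x \<and> y * x = f_of S0 S x)"

end

theory Submission
  imports Defs
begin

text \<open>Write \<open>x = e xb f\<close> and \<open>a = xb\<^sup>+\<close>, \<open>b = xb\<^sup>*\<close>. Since \<open>\<R>\<^sup>*\<close> is a left congruence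
containing \<open>\<R>\<close>, \<open>x \<R>\<^sup>* e xb \<R>\<^sup>* e a = e\<close>, and dually \<open>x \<L>\<^sup>* f\<close>; this makes \<open>e\<close> and
\<open>f\<close> unique. If \<open>x\<close> is idempotent then \<open>x e = e\<close> and \<open>f x = f\<close>, so \<open>x\<^sup>0 = w\<close> with
\<open>w = f e\<close>. Moreover \<open>a = xb w\<close>, \<open>b = w xb\<close> and \<open>xb w xb = xb\<close>; as \<open>w\<close> is idempotent
in a quasi-adequate semigroup, \<open>xb = a b\<close> is a product of commuting idempotents of \<open>S\<^sup>0\<close>,
hence idempotent, and then \<open>w = w xb xb w = b a = xb\<close>.\<close>

lemma lm1_mult_assoc: "lm1 s (p * q) = lm1 s p * q"
  by (cases s) (simp_all add: mult.assoc)

lemma rm1_mult_assoc: "rm1 (p * q) s = p * rm1 q s"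
  by (cases s) (simp_all add: mult.assoc)

lemma lm1_rm1_assoc: "lm1 s (rm1 p t) = rm1 (lm1 s p) t"
  by (cases s; cases t) (simp_all add: mult.assoc)

lemma lm1_closed: "semigroup_on S \<Longrightarrow> s \<in> ones S \<Longrightarrow> p \<in> S \<Longrightarrow> lm1 s p \<in> S"
  by (cases s) (auto simp: ones_def semigroup_on_def)

lemma rm1_closed: "semigroup_on S \<Longrightarrow> s \<in> ones S \<Longrightarrow> p \<in> S \<Longrightarrow> rm1 p s \<in> S"
  by (cases s) (auto simp: ones_def semigroup_on_def)

lemma Some_in_ones [simp]: "Some p \<in> ones S \<longleftrightarrow> p \<in> S"
  by (auto simp: ones_def)

lemma None_in_ones [simp]: "None \<in> ones S"
  by (simp add: ones_def)

lemma mult_closed: "semigroup_on S \<Longrightarrow> a \<in> S \<Longrightarrow> b \<in> S \<Longrightarrow> a * b \<in> S"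
  by (simp add: semigroup_on_def)

subsection \<open>The relations \<open>\<R>\<^sup>*\<close> and \<open>\<L>\<^sup>*\<close>\<close>

lemma Rstar_sym: "Rstar S a b \<Longrightarrow> Rstar S b a"
  unfolding Rstar_def by blast

lemma Rstar_trans: "Rstar S a b \<Longrightarrow> Rstar S b c \<Longrightarrow> Rstar S a c"
  unfolding Rstar_def by blast

lemma Lstar_sym: "Lstar S a b \<Longrightarrow> Lstar S b a"
  unfolding Lstar_def by blast

lemma Lstar_trans: "Lstar S a b \<Longrightarrow> Lstar S b c \<Longrightarrow> Lstar S a c"
  unfolding Lstar_def by blast

lemma greenR_imp_Rstar:
  assumes "greenR S a b"
  shows "Rstar S a b"
proof -
  obtain u v where a: "a = rm1 b u" and b: "b = rm1 a v"
    using assms by (auto simp: greenR_def)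
  have "lm1 s a = lm1 t a \<longleftrightarrow> lm1 s b = lm1 t b" for s t
  proof -
    have h: "lm1 s a = rm1 (lm1 s b) u" "lm1 s b = rm1 (lm1 s a) v" for s
      using lm1_rm1_assoc[of s b u] lm1_rm1_assoc[of s a v]
      by (simp_all only: a[symmetric] b[symmetric])
    show ?thesis
      by (metis h)
  qed
  with assms show ?thesis
    by (simp add: Rstar_def greenR_def)
qed

lemma greenL_imp_Lstar:
  assumes "greenL S a b"
  shows "Lstar S a b"
proof -
  obtain u v where a: "a = lm1 u b" and b: "b = lm1 v a"
    using assms by (auto simp: greenL_def)
  have "rm1 a s = rm1 a t \<longleftrightarrow> rm1 b s = rm1 b t" for s t
  proof -
    have h: "rm1 a s = lm1 u (rm1 b s)" "rm1 b s = lm1 v (rm1 a s)" for s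
      using lm1_rm1_assoc[of u b s] lm1_rm1_assoc[of v a s]
      by (simp_all only: a[symmetric] b[symmetric])
    show ?thesis
      by (metis h)
  qed
  with assms show ?thesis
    by (simp add: Lstar_def greenL_def)
qed

lemma Rstar_mult_left:
  assumes S: "semigroup_on S" and c: "c \<in> S" and ab: "Rstar S a b"
  shows "Rstar S (c * a) (c * b)"
proof -
  have "lm1 s (c * a) = lm1 t (c * a) \<longleftrightarrow> lm1 s (c * b) = lm1 t (c * b)"
    if "s \<in> ones S" "t \<in> ones S" for s t
  proof -
    have "Some (lm1 s c) \<in> ones S" "Some (lm1 t c) \<in> ones S"
      using lm1_closed[OF S _ c] that by simp_all
    with ab have "lm1 s c * a = lm1 t c * a \<longleftrightarrow> lm1 s c * b = lm1 t c * b"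
      unfolding Rstar_def by (metis lm1.simps(2))
    then show ?thesis
      by (simp add: lm1_mult_assoc)
  qed
  moreover have "c * a \<in> S" "c * b \<in> S"
    using ab c S by (auto simp: Rstar_def semigroup_on_def)
  ultimately show ?thesis
    by (simp add: Rstar_def)
qed

lemma Lstar_mult_right:
  assumes S: "semigroup_on S" and c: "c \<in> S" and ab: "Lstar S a b"
  shows "Lstar S (a * c) (b * c)"
proof -
  have "rm1 (a * c) s = rm1 (a * c) t \<longleftrightarrow> rm1 (b * c) s = rm1 (b * c) t"
    if "s \<in> ones S" "t \<in> ones S" for s t
  proof -
    have "Some (rm1 c s) \<in> ones S" "Some (rm1 c t) \<in> ones S"
      using rm1_closed[OF S _ c] that by simp_all
    with ab have "a * rm1 c s = a * rm1 c t \<longleftrightarrow> b * rm1 c s = b * rm1 c t"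
      unfolding Lstar_def by (metis rm1.simps(2))
    then show ?thesis
      by (simp add: rm1_mult_assoc)
  qed
  moreover have "a * c \<in> S" "b * c \<in> S"
    using ab c S by (auto simp: Lstar_def semigroup_on_def)
  ultimately show ?thesis
    by (simp add: Lstar_def)
qed

lemma Rstar_idem_mult:
  assumes "Rstar S a e" "e \<in> idems S"
  shows "e * a = a"
proof -
  have "e \<in> S" "lm1 (Some e) e = lm1 None e"
    using assms(2) by (simp_all add: idems_def)
  with assms(1) have "lm1 (Some e) a = lm1 None a"
    unfolding Rstar_def by (meson Some_in_ones None_in_ones)
  then show ?thesis
    by simp
qed

lemma Lstar_idem_mult:
  assumes "Lstar S a f" "f \<in> idems S"
  shows "a * f = a"
proof -
  have "f \<in> S" "rm1 f (Some f) = rm1 f None"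
    using assms(2) by (simp_all add: idems_def)
  with assms(1) have "rm1 a (Some f) = rm1 a None"
    unfolding Lstar_def by (meson Some_in_ones None_in_ones)
  then show ?thesis
    by simp
qed

lemma greenL_idems:
  assumes "greenL S e a" "e \<in> idems S" "a \<in> idems S"
  shows "e * a = e" "a * e = a"
  using Lstar_idem_mult[OF greenL_imp_Lstar[OF assms(1)] assms(3)]
    Lstar_idem_mult[OF Lstar_sym[OF greenL_imp_Lstar[OF assms(1)]] assms(2)]
  by simp_all

lemma greenR_idems:
  assumes "greenR S f b" "f \<in> idems S" "b \<in> idems S"
  shows "b * f = f" "f * b = b"
  using Rstar_idem_mult[OF greenR_imp_Rstar[OF assms(1)] assms(3)]
    Rstar_idem_mult[OF Rstar_sym[OF greenR_imp_Rstar[OF assms(1)]] assms(2)]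
  by simp_all

lemma inverse_unique:
  fixes x y z :: "'a::semigroup_mult"
  assumes "y * x * y = y" "z * x * z = z" "x * y = x * z" "y * x = z * x"
  shows "y = z"
proof -
  have "y = y * x * y"
    using assms(1) by (rule sym)
  also have "\<dots> = y * (x * z)"
    by (simp only: mult.assoc assms(3))
  also have "\<dots> = z * x * z"
    by (simp only: mult.assoc[symmetric] assms(4))
  finally show ?thesis
    using assms(2) by simp
qed

subsection \<open>The idempotents \<open>a\<^sup>+\<close> and \<open>a\<^sup>*\<close> of an adequate semigroup\<close>

lemma adequate_Rstar_idem_unique:
  assumes "adequate U" "e \<in> idems U" "e' \<in> idems U" "Rstar U a e" "Rstar U a e'"
  shows "e = e'"
proof -
  have "Rstar U e e'"
    using assms(4,5) by (blast intro: Rstar_trans Rstar_sym)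
  then have "e' * e = e" "e * e' = e'"
    using assms(2,3) Rstar_sym by (blast intro: Rstar_idem_mult)+
  with assms(1-3) show ?thesis
    by (metis adequate_def)
qed

lemma adequate_Lstar_idem_unique:
  assumes "adequate U" "e \<in> idems U" "e' \<in> idems U" "Lstar U a e" "Lstar U a e'"
  shows "e = e'"
proof -
  have "Lstar U e e'"
    using assms(4,5) by (blast intro: Lstar_trans Lstar_sym)
  then have "e * e' = e" "e' * e = e'"
    using assms(2,3) Lstar_sym by (blast intro: Lstar_idem_mult)+
  with assms(1-3) show ?thesis
    by (metis adequate_def)
qed

lemma plus_of_spec:
  assumes "adequate U" "a \<in> U"
  shows "plus_of U a \<in> idems U" "Rstar U a (plus_of U a)"
proof -
  obtain e where "e \<in> idems U" "Rstar U a e"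
    using assms by (auto simp: adequate_def abundant_def)
  then have "\<exists>!e. e \<in> idems U \<and> Rstar U a e"
    using adequate_Rstar_idem_unique[OF assms(1)] by blast
  from theI'[OF this] show "plus_of U a \<in> idems U" "Rstar U a (plus_of U a)"
    unfolding plus_of_def by simp_all
qed

lemma star_of_spec:
  assumes "adequate U" "a \<in> U"
  shows "star_of U a \<in> idems U" "Lstar U a (star_of U a)"
proof -
  obtain e where "e \<in> idems U" "Lstar U a e"
    using assms by (auto simp: adequate_def abundant_def)
  then have "\<exists>!e. e \<in> idems U \<and> Lstar U a e"
    using adequate_Lstar_idem_unique[OF assms(1)] by blast
  from theI'[OF this] show "star_of U a \<in> idems U" "Lstar U a (star_of U a)"
    unfolding star_of_def by simp_all
qed

lemma plus_of_mult: "adequate U \<Longrightarrow> a \<in> U \<Longrightarrow> plus_of U a * a = a"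
  using Rstar_idem_mult plus_of_spec by blast

lemma mult_star_of: "adequate U \<Longrightarrow> a \<in> U \<Longrightarrow> a * star_of U a = a"
  using Lstar_idem_mult star_of_spec by blast

subsection \<open>Adequate transversals\<close>

locale transversal =
  fixes S S0 :: "'a::semigroup_mult set"
  assumes semigroup: "semigroup_on S"
    and adequate_transversal: "adequate_transversal S0 S"
begin

lemma adequate_S0: "adequate S0"
  using adequate_transversal by (simp add: adequate_transversal_def)

lemma S0_subset: "S0 \<subseteq> S"
  using adequate_transversal by (simp add: adequate_transversal_def star_subsemigroup_def)

lemma idems_S0_subset: "idems S0 \<subseteq> idems S"
  using S0_subset by (auto simp: idems_def)

lemma Rstar_plus_of: "xb \<in> S0 \<Longrightarrow> Rstar S xb (plus_of S0 xb)"
  using adequate_transversal plus_of_spec[OF adequate_S0]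
  by (auto simp: adequate_transversal_def star_subsemigroup_def idems_def)

lemma Lstar_star_of: "xb \<in> S0 \<Longrightarrow> Lstar S xb (star_of S0 xb)"
  using adequate_transversal star_of_spec[OF adequate_S0]
  by (auto simp: adequate_transversal_def star_subsemigroup_def idems_def)

lemma decomp_exists: "x \<in> S \<Longrightarrow> \<exists>xb e f. decomp S0 S x xb e f"
  using adequate_transversal by (simp add: adequate_transversal_def)

lemma decomp_in_S0: "decomp S0 S x xb e f \<Longrightarrow> xb \<in> S0"
  by (simp add: decomp_def)

lemma decomp_idems: "decomp S0 S x xb e f \<Longrightarrow> e \<in> idems S \<and> f \<in> idems S"
  by (simp add: decomp_def)

lemma decomp_plus_of:
  assumes "decomp S0 S x xb e f"
  shows "e * plus_of S0 xb = e" "plus_of S0 xb * e = plus_of S0 xb"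
  using assms greenL_idems[of S e "plus_of S0 xb"] plus_of_spec(1)[OF adequate_S0] idems_S0_subset
  by (auto simp: decomp_def)

lemma decomp_star_of:
  assumes "decomp S0 S x xb e f"
  shows "star_of S0 xb * f = f" "f * star_of S0 xb = star_of S0 xb"
  using assms greenR_idems[of S f "star_of S0 xb"] star_of_spec(1)[OF adequate_S0] idems_S0_subset
  by (auto simp: decomp_def)

lemma plus_of_in_S: "xb \<in> S0 \<Longrightarrow> plus_of S0 xb \<in> S"
  using plus_of_spec(1)[OF adequate_S0] idems_S0_subset by (auto simp: idems_def)

lemma star_of_in_S: "xb \<in> S0 \<Longrightarrow> star_of S0 xb \<in> S"
  using star_of_spec(1)[OF adequate_S0] idems_S0_subset by (auto simp: idems_def)

lemma decomp_in_S:
  "decomp S0 S x xb e f \<Longrightarrow> xb \<in> S \<and> e \<in> S \<and> f \<in> S \<and> x \<in> S"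
  using S0_subset semigroup by (auto simp: decomp_def idems_def intro!: mult_closed)

lemma decomp_Rstar:
  assumes d: "decomp S0 S x xb e f"
  shows "Rstar S x e"
proof -
  have xb: "xb \<in> S0" and x: "x = e * xb * f"
    using d by (simp_all add: decomp_def)
  have "x * star_of S0 xb = e * xb"
    using x decomp_star_of[OF d] mult_star_of[OF adequate_S0 xb] by (simp add: mult.assoc)
  with x have "greenR S x (e * xb)"
    using decomp_in_S[OF d] star_of_in_S[OF xb] semigroup unfolding greenR_def
    by (metis Some_in_ones mult_closed rm1.simps(2))
  moreover have "Rstar S (e * xb) e"
    using Rstar_mult_left[OF semigroup _ Rstar_plus_of[OF xb]] decomp_plus_of[OF d] decomp_in_S[OF d]
    by metis
  ultimately show ?thesis
    by (blast intro: greenR_imp_Rstar Rstar_trans)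
qed

lemma decomp_Lstar:
  assumes d: "decomp S0 S x xb e f"
  shows "Lstar S x f"
proof -
  have xb: "xb \<in> S0" and x: "x = e * (xb * f)"
    using d by (simp_all add: decomp_def mult.assoc)
  have "plus_of S0 xb * x = xb * f"
    using x decomp_plus_of[OF d] plus_of_mult[OF adequate_S0 xb]
    by (simp add: mult.assoc[symmetric])
  with x have "greenL S x (xb * f)"
    using decomp_in_S[OF d] plus_of_in_S[OF xb] semigroup unfolding greenL_def
    by (metis Some_in_ones mult_closed lm1.simps(2))
  moreover have "Lstar S (xb * f) f"
    using Lstar_mult_right[OF semigroup _ Lstar_star_of[OF xb]] decomp_star_of[OF d] decomp_in_S[OF d]
    by metis
  ultimately show ?thesis
    by (blast intro: greenL_imp_Lstar Lstar_trans)
qed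

lemma decomp_same_xb:
  "x \<in> S \<Longrightarrow> decomp S0 S x xb e f \<Longrightarrow> decomp S0 S x xb' e' f' \<Longrightarrow> xb' = xb"
  using adequate_transversal unfolding adequate_transversal_def by blast

lemma e_of_f_of:
  assumes x: "x \<in> S" and d: "decomp S0 S x xb e f"
  shows "e_of S0 S x = e" "f_of S0 S x = f"
proof -
  have "e' = e \<and> f' = f" if d': "decomp S0 S x xb' e' f'" for xb' e' f'
  proof
    have d'': "decomp S0 S x xb e' f'"
      using d' decomp_same_xb[OF x d d'] by simp
    have "e * e' = e'"
      using Rstar_idem_mult[OF Rstar_trans[OF Rstar_sym[OF decomp_Rstar[OF d']] decomp_Rstar[OF d]]]
        decomp_idems[OF d] by simp
    moreover have "e * e' = e"
      by (metis decomp_plus_of[OF d] decomp_plus_of(2)[OF d''] mult.assoc)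
    ultimately show "e' = e" by simp
    have "f' * f = f'"
      using Lstar_idem_mult[OF Lstar_trans[OF Lstar_sym[OF decomp_Lstar[OF d']] decomp_Lstar[OF d]]]
        decomp_idems[OF d] by simp
    moreover have "f' * f = f"
      by (metis decomp_star_of[OF d] decomp_star_of(2)[OF d''] mult.assoc)
    ultimately show "f' = f" by simp
  qed
  with d show "e_of S0 S x = e" "f_of S0 S x = f"
    unfolding e_of_def f_of_def by (blast intro: the_equality)+
qed

lemma I_Lambda_subset_idems: "I_set S0 S \<union> Lambda_set S0 S \<subseteq> idems S"
  using decomp_exists e_of_f_of decomp_idems
  by (fastforce simp: I_set_def Lambda_set_def)

lemma idem_decomp_absorb:
  assumes x: "x \<in> idems S" and d: "decomp S0 S x xb e f"
  shows "x * e = e" "f * x = f"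
  using Rstar_idem_mult[OF Rstar_sym[OF decomp_Rstar[OF d]] x]
    Lstar_idem_mult[OF Lstar_sym[OF decomp_Lstar[OF d]] x] by simp_all

lemma zero_of_idem_eq:
  assumes x: "x \<in> idems S" and d: "decomp S0 S x xb e f"
  shows "zero_of S0 S x = f * e"
proof -
  have xS: "x \<in> S" and ee: "e * e = e" and ff: "f * f = f" and x_def: "x = e * xb * f"
    using x d by (auto simp: idems_def decomp_def)
  have xe: "x * e = e" and fx: "f * x = f"
    using idem_decomp_absorb[OF x d] by simp_all
  have xf: "x * f = x"
    by (simp only: x_def mult.assoc ff)
  have ex: "e * x = x"
    by (simp only: x_def mult.assoc[symmetric] ee)
  have xw: "x * (f * e) = e"
    by (simp only: mult.assoc[symmetric] xf xe)
  have wx: "f * e * x = f"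
    by (simp only: mult.assoc ex fx)
  have "f * e \<in> S"
    using decomp_in_S[OF d] semigroup by (simp add: mult_closed)
  moreover have "x * (f * e) * x = x"
    by (simp only: xw ex)
  moreover have "f * e * x * (f * e) = f * e"
    by (simp only: wx mult.assoc[symmetric] ff)
  ultimately have inv: "inverse_in S x (f * e)"
    by (simp add: inverse_in_def)
  show ?thesis
    unfolding zero_of_def e_of_f_of[OF xS d]
  proof (rule the_equality)
    show "inverse_in S x (f * e) \<and> x * (f * e) = e \<and> f * e * x = f"
      using inv xw wx by simp
  next
    fix y
    assume "inverse_in S x y \<and> x * y = e \<and> y * x = f"
    with inv xw wx show "y = f * e"
      by (metis inverse_in_def inverse_unique)
  qed
qed

lemma idem_decomp_f_mult_e:
  assumes qa: "quasi_adequate S" and x: "x \<in> idems S" and d: "decomp S0 S x xb e f"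
  shows "f * e = xb"
proof -
  define a b w where "a = plus_of S0 xb" and "b = star_of S0 xb" and "w = f * e"
  have xb: "xb \<in> S0" and x_def: "x = e * xb * f" and xx: "x * x = x"
    using x d by (auto simp: idems_def decomp_def)
  have ab: "a * b = b * a" "a * a = a" "b * b = b"
    using adequate_S0 plus_of_spec[OF adequate_S0 xb] star_of_spec[OF adequate_S0 xb]
    by (auto simp: a_def b_def adequate_def idems_def)
  have ww: "w * w = w"
    using qa decomp_idems[OF d] by (simp add: w_def quasi_adequate_def idems_def)
  have xe: "x * e = e" and fx: "f * x = f"
    using idem_decomp_absorb[OF x d] by simp_all
  have ae: "a * e = a" and axb: "a * xb = xb"
    using decomp_plus_of(2)[OF d] plus_of_mult[OF adequate_S0 xb] by (simp_all add: a_def)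
  have fb: "f * b = b" and bf: "b * f = f" and xbb: "xb * b = xb"
    using decomp_star_of[OF d] mult_star_of[OF adequate_S0 xb] by (simp_all add: b_def)
  have ax: "a * x = xb * f"
    by (simp only: x_def mult.assoc[symmetric] ae axb)
  have xb': "x * b = e * xb"
    by (simp only: x_def mult.assoc fb xbb)
  have a_eq: "a = xb * w"
  proof -
    have "a = a * x * e"
      using ae xe by (simp add: mult.assoc)
    then show ?thesis
      by (simp only: ax w_def mult.assoc)
  qed
  have b_eq: "b = w * xb"
  proof -
    have "b = f * x * b"
      using fb fx by simp
    then show ?thesis
      by (simp only: xb' w_def mult.assoc)
  qed
  have "xb * w * xb = (a * x) * (x * b)"
    by (simp only: ax xb' w_def mult.assoc)
  also have "\<dots> = (a * x) * b"
    by (metis mult.assoc xx)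
  also have "\<dots> = xb"
    by (simp only: ax) (simp only: mult.assoc fb xbb)
  finally have xbwxb: "xb * w * xb = xb" .
  have xb_ab: "a * b = xb"
  proof -
    have "a * b = xb * (w * w) * xb"
      by (simp only: a_eq b_eq mult.assoc)
    then show ?thesis
      by (simp only: ww xbwxb)
  qed
  have xbxb: "xb * xb = xb"
  proof -
    have "xb * xb = a * (b * a) * b"
      by (simp only: xb_ab[symmetric] mult.assoc)
    also have "\<dots> = (a * a) * (b * b)"
      by (simp only: ab(1)[symmetric] mult.assoc)
    finally show ?thesis
      by (simp only: ab(2,3) xb_ab)
  qed
  have wxbw: "w * xb * w = w"
    by (simp only: b_eq[symmetric]) (simp only: w_def mult.assoc[symmetric] bf)
  have "w = (w * xb) * (xb * w)"
    by (metis mult.assoc xbxb wxbw)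
  also have "\<dots> = b * a"
    by (simp only: a_eq b_eq)
  also have "\<dots> = xb"
    using ab(1) xb_ab by simp
  finally show ?thesis
    by (simp only: w_def)
qed

lemma zero_of_idem_in_idems_S0:
  assumes qa: "quasi_adequate S" and x: "x \<in> idems S"
  shows "zero_of S0 S x \<in> idems S0"
proof -
  have "x \<in> S"
    using x by (simp add: idems_def)
  then obtain xb e f where d: "decomp S0 S x xb e f"
    using decomp_exists by blast
  have "f * e \<in> idems S"
    using qa decomp_idems[OF d] by (simp add: quasi_adequate_def)
  then have "xb * xb = xb"
    using idem_decomp_f_mult_e[OF qa x d] by (simp add: idems_def)
  moreover have "zero_of S0 S x = xb"
    using zero_of_idem_eq[OF x d] idem_decomp_f_mult_e[OF qa x d] by simp
  ultimately show ?thesis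
    using decomp_in_S0[OF d] by (simp add: idems_def)
qed

end

theorem corollary2p2:
  fixes S S0 :: "'a::semigroup_mult set"
  assumes "quasi_adequate S"
    and "adequate_transversal S0 S"
  shows "(\<forall>x\<in>idems S. zero_of S0 S x \<in> idems S0) \<and>
         (\<forall>x\<in>I_set S0 S \<union> Lambda_set S0 S. zero_of S0 S x \<in> idems S0)"
proof -
  interpret transversal S S0
    using assms by unfold_locales (simp_all add: quasi_adequate_def abundant_def)
  show ?thesis
    using zero_of_idem_in_idems_S0[OF assms(1)] I_Lambda_subset_idems by blast
qed

end
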